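(* (1) If $m,n\in\mathbb{N}$, $m\neq n$, and $m/n$ is an integer power of a prime, then the homomorphism $\rho^{\mathbb{Z}}_{\{m,n\},\{m\}}\colon\mathbb{Z}[q]^{\{m,n\}}\to\mathbb{Z}[q]^{\{m\}}$ is not surjective. (2) If $m\mid n$ and $m\neq n$, then $\rho^{\mathbb{Z}}_{\langle n\rangle,\langle m\rangle}\colon\mathbb{Z}[q]^{\langle n\rangle}\to\mathbb{Z}[q]^{\langle m\rangle}$ is not surjective. (3) For each nonempty finite subset $S\subset\mathbb{N}$, the homomorphism $\rho^{\mathbb{Z}}_{\mathbb{N},S}\colon\mathbb{Z}[q]^{\mathbb{N}}\to\mathbb{Z}[q]^S$ is not surjective.
   Context: $q$ is an indeterminate, $\Phi_n(q)$ the $n$th cyclotomic polynomial. For $S\subset\mathbb{N}$, $\Phi_S^*$ is the multiplicative subset of $\mathbb{Z}[q]$ generated by $\{\Phi_k(q):k\in S\}$, directed by divisibility, and $\mathbb{Z}[q]^S=\varprojlim_{f\in\Phi_S^*}\mathbb{Z}[q]/(f)$; for $S'\subset S$, $\rho^{\mathbb{Z}}_{S,S'}$ is induced by the identity of $\mathbb{Z}[q]$. For $n\in\mathbb{N}$, $\langle n\rangle=\{k\in\mathbb{N}:k\mid n\}$, so $\mathbb{Z}[q]^{\langle n\rangle}=\varprojlim_j\mathbb{Z}[q]/(q^n-1)^j$. *)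

theory Defs
  imports Complex_Main "HOL-Computational_Algebra.Polynomial" "HOL-Library.Multiset"
begin

definition cyclotomic :: "nat \<Rightarrow> int poly" where
  "cyclotomic n = (THE p. map_poly of_int p =
      (\<Prod>k\<in>{k\<in>{1..n}. coprime k n}. [:- cis (2 * pi * real k / real n), 1:] :: complex poly))"

definition Phi_star :: "nat set \<Rightarrow> int poly set" where
  "Phi_star S = {prod_mset (image_mset cyclotomic M) | M. set_mset M \<subseteq> S}"

text \<open>Elements of Z[q]^S = lim_{f \<in> Phi_star S} Z[q]/(f), represented by families of
  representatives x f of classes mod f, compatible along divisibility.\<close>
definition invlim_elem :: "nat set \<Rightarrow> (int poly \<Rightarrow> int poly) \<Rightarrow> bool" where
  "invlim_elem S x \<longleftrightarrow>
     (\<forall>f\<in>Phi_star S. \<forall>g\<in>Phi_star S. f dvd g \<longrightarrow> f dvd (x g - x f))"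

text \<open>Surjectivity of rho_{S,S'} : Z[q]^S \<rightarrow> Z[q]^{S'} (S' \<subseteq> S), the map induced by the
  identity of Z[q]: the class (x f mod f)_{f \<in> Phi_star S} goes to (x f mod f)_{f \<in> Phi_star S'}.
  Two families define the same element iff they agree modulo f for every index f.\<close>
definition rhoZ_surjective :: "nat set \<Rightarrow> nat set \<Rightarrow> bool" where
  "rhoZ_surjective S S' \<longleftrightarrow>
     (\<forall>y. invlim_elem S' y \<longrightarrow>
        (\<exists>x. invlim_elem S x \<and> (\<forall>f\<in>Phi_star S'. f dvd (x f - y f))))"

definition divisors_set :: "nat \<Rightarrow> nat set" where
  "divisors_set n = {k. 0 < k \<and> k dvd n}"

end

theory Submission
  imports Defs "HOL-Library.Real_Mod" "HOL-Library.Countable" "HOL-Number_Theory.Totient"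
begin

(* Let S be finite, m \<in> S, n \<notin> S, and suppose some power of Phi_m lies in
   the ideal (p, Phi_n) for a prime p.  Put h = prod_{k \<in> S} Phi_k.  Every 0/1 sequence c defines
   the element sum_i c_i h^i of Z[q]^S.  If rho_{S \<union> {n}, S} were surjective, a lift of this
   element would have a component at Phi_n that is congruent to the partial sums modulo every
   ideal (p^a, Phi_n), because h is nilpotent modulo (p, Phi_n).  These ideals intersect in
   (Phi_n), and Phi_n divides no power of h, so distinct sequences would have distinct
   components: an injection of an uncountable set into Z[q].
   The hypothesis holds whenever m/n is a power of p, since the Frobenius congruence
   f(q)^p = f(q^p) mod p gives Phi_{Np} = Phi_N^p or Phi_N^(p-1) mod p.  Each part of the
   theorem then follows by exhibiting such a pair m, n inside the larger index set, since
   surjectivity of rho_{S,S'} passes to every intermediate index set. *)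

section \<open>Cyclotomic polynomials over the complex numbers\<close>

abbreviation cpoly :: "int poly \<Rightarrow> complex poly" where
  "cpoly \<equiv> map_poly of_int"

lemma cpoly_add: "cpoly (p + q) = cpoly p + cpoly q"
  by (rule poly_eqI) (simp add: coeff_map_poly)

lemma cpoly_diff: "cpoly (p - q) = cpoly p - cpoly q"
  by (rule poly_eqI) (simp add: coeff_map_poly)

lemma cpoly_mult: "cpoly (p * q) = cpoly p * cpoly q"
  by (rule poly_eqI) (simp add: coeff_map_poly coeff_mult of_int_sum)

lemma cpoly_prod: "cpoly (\<Prod>i\<in>A. f i) = (\<Prod>i\<in>A. cpoly (f i))"
  by (induction A rule: infinite_finite_induct) (auto simp: cpoly_mult)

lemma cpoly_power: "cpoly (p ^ k) = cpoly p ^ k"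
  by (induction k) (auto simp: cpoly_mult)

lemma cpoly_eq_iff: "cpoly p = cpoly q \<longleftrightarrow> p = q"
  by (auto simp: poly_eq_iff coeff_map_poly)

lemma cpoly_dvd: "p dvd q \<Longrightarrow> cpoly p dvd cpoly q"
  by (metis dvdE dvdI cpoly_mult)

lemma degree_cpoly [simp]: "degree (cpoly p) = degree p"
  by (rule degree_map_poly) simp

lemma lead_coeff_cpoly: "lead_coeff (cpoly p) = of_int (lead_coeff p)"
  by (simp add: coeff_map_poly degree_map_poly)

definition root_unity :: "nat \<Rightarrow> nat \<Rightarrow> complex" where
  "root_unity n k = cis (2 * pi * real k / real n)"

definition primitive_roots :: "nat \<Rightarrow> complex set" where
  "primitive_roots n = root_unity n ` totatives n"

definition cyclotomic_complex :: "nat \<Rightarrow> complex poly" where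
  "cyclotomic_complex n = (\<Prod>z\<in>primitive_roots n. [:-z, 1:])"

lemma root_unity_eq_1_iff: "0 < n \<Longrightarrow> root_unity n k = 1 \<longleftrightarrow> n dvd k"
proof -
  assume n: "0 < n"
  have "root_unity n k = 1 \<longleftrightarrow> (\<exists>m::int. real_of_int (int k) = real_of_int (int n * m))"
    unfolding root_unity_def cis_eq_1_iff using n by (intro ex_cong1) (auto simp: field_simps)
  also have "\<dots> \<longleftrightarrow> int n dvd int k"
    by (simp only: of_int_eq_iff dvd_def)
  finally show ?thesis by simp
qed

lemma root_unity_power: "root_unity n k ^ j = root_unity n (k * j)"
  by (simp add: root_unity_def DeMoivre mult_ac)

lemma root_unity_mult_cancel: "0 < g \<Longrightarrow> root_unity (d * g) (l * g) = root_unity d l"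
  by (simp add: root_unity_def mult.assoc)

lemma inj_on_root_unity_totatives: "inj_on (root_unity n) (totatives n)"
proof (cases "n \<le> 1")
  case True
  then show ?thesis by (cases n) auto
next
  case False
  then have "totatives n \<subseteq> {..<n}" using totatives_less by auto
  moreover have "inj_on (root_unity n) {..<n}"
    using bij_betw_roots_unity[of n] False unfolding root_unity_def[abs_def] bij_betw_def by simp
  ultimately show ?thesis by (rule inj_on_subset[rotated])
qed

lemma primitive_root_power_eq_1_iff:
  assumes "0 < d" "z \<in> primitive_roots d"
  shows "z ^ j = 1 \<longleftrightarrow> d dvd j"
proof -
  from assms obtain l where "l \<in> totatives d" and z: "z = root_unity d l"
    by (auto simp: primitive_roots_def)
  then have "coprime d l" by (simp add: in_totatives_iff coprime_commute)
  then show ?thesis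
    using assms by (simp add: z root_unity_power root_unity_eq_1_iff coprime_dvd_mult_right_iff)
qed

lemma primitive_roots_disjoint:
  "0 < d \<Longrightarrow> 0 < d' \<Longrightarrow> z \<in> primitive_roots d \<Longrightarrow> z \<in> primitive_roots d' \<Longrightarrow> d = d'"
  by (metis primitive_root_power_eq_1_iff dvd_antisym dvd_refl)

lemma root_unity_in_primitive_roots:
  assumes "0 < N" "k < N"
  shows "root_unity N k \<in> primitive_roots (N div gcd k N)"
proof (cases "k = 0")
  case True
  then show ?thesis using assms by (simp add: primitive_roots_def root_unity_def image_iff)
next
  case False
  define g where "g = gcd k N"
  define d where "d = N div g"
  define l where "l = k div g"
  have "0 < g" using assms by (simp add: g_def)
  have N: "N = d * g" and k: "k = l * g" by (simp_all add: d_def l_def g_def)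
  have "coprime l d"
    unfolding l_def d_def g_def using False by (intro div_gcd_coprime) auto
  moreover have "0 < l" "l \<le> d" using False assms \<open>0 < g\<close> by (auto simp: N k)
  ultimately have "l \<in> totatives d" by (simp add: in_totatives_iff coprime_commute)
  moreover have "root_unity N k = root_unity d l"
    using root_unity_mult_cancel[OF \<open>0 < g\<close>] by (simp add: N k)
  moreover have "N div gcd k N = d" by (simp add: d_def g_def)
  ultimately show ?thesis by (simp add: primitive_roots_def)
qed

lemma roots_unity_eq_Union_primitive_roots:
  assumes N: "0 < N"
  shows "{z::complex. z ^ N = 1} = (\<Union>d\<in>{d. d dvd N}. primitive_roots d)"
proof (intro equalityI subsetI)
  fix z :: complex assume "z \<in> {z. z ^ N = 1}"
  then obtain k where "k < N" and z: "z = root_unity N k"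
    using bij_betw_roots_unity[OF N] by (auto simp: bij_betw_def root_unity_def)
  then show "z \<in> (\<Union>d\<in>{d. d dvd N}. primitive_roots d)"
    using root_unity_in_primitive_roots[OF N]
    by (metis UN_iff dvd_div_mult_self gcd_dvd2 dvd_triv_left mem_Collect_eq)
next
  fix z assume "z \<in> (\<Union>d\<in>{d. d dvd N}. primitive_roots d)"
  then obtain d where "d dvd N" "z \<in> primitive_roots d" by blast
  moreover have "0 < d" using \<open>d dvd N\<close> N by (auto intro: Nat.gr0I)
  ultimately show "z \<in> {z. z ^ N = 1}" using primitive_root_power_eq_1_iff by blast
qed

lemma prod_linear_factors_dvd:
  fixes F :: "'a::idom poly"
  assumes "finite A" "\<And>z. z \<in> A \<Longrightarrow> poly F z = 0"
  shows "(\<Prod>z\<in>A. [:-z, 1:]) dvd F"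
  using assms
proof (induction A rule: finite_induct)
  case (insert a A)
  then obtain G where F: "F = (\<Prod>z\<in>A. [:-z, 1:]) * G" by (auto elim: dvdE)
  have "poly (\<Prod>z\<in>A. [:-z, 1:]) a \<noteq> 0"
    using insert.hyps by (simp add: poly_prod)
  moreover have "poly F a = 0" by (rule insert.prems) simp
  ultimately have "poly G a = 0" using F by simp
  then obtain H where G: "G = [:-a, 1:] * H" by (auto simp: poly_eq_0_iff_dvd elim: dvdE)
  have "F = ([:-a, 1:] * (\<Prod>z\<in>A. [:-z, 1:])) * H" unfolding F G by (simp only: mult_ac)
  then show ?case using insert.hyps by (metis dvd_triv_left prod.insert)
qed simp

lemma monic_dvd_imp_eq:
  fixes P F :: "'a::idom poly"
  assumes "lead_coeff P = 1" "lead_coeff F = 1" "degree P = degree F" "P dvd F"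
  shows "P = F"
proof -
  obtain G where G: "F = P * G" using assms(4) by (elim dvdE)
  then have "G \<noteq> 0" "P \<noteq> 0" using assms(2) by auto
  then have "degree G = 0" using G assms(3) by (simp add: degree_mult_eq)
  moreover have "lead_coeff G = 1" using G assms(1,2) by (simp add: lead_coeff_mult)
  ultimately have "G = 1" by (metis degree_0_id one_pCons)
  then show ?thesis using G by simp
qed

lemma monom_one_minus_one_eq_prod_roots_unity:
  assumes N: "0 < N"
  shows "(monom 1 N - 1 :: complex poly) = (\<Prod>z\<in>{z. z ^ N = 1}. [:-z, 1:])"
proof (rule sym, rule monic_dvd_imp_eq)
  have fin: "finite {z::complex. z ^ N = 1}" using N by (intro finite_roots_unity) auto
  have deg: "degree (monom 1 N - 1 :: complex poly) = N"
    using N unfolding diff_conv_add_uminus by (subst degree_add_eq_left) (auto simp: degree_monom_eq)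
  then show "lead_coeff (monom 1 N - 1 :: complex poly) = 1"
    using N by (simp add: coeff_diff)
  show "lead_coeff (\<Prod>z\<in>{z. z ^ N = 1}. [:-z, 1:] :: complex poly) = 1"
    by (simp add: lead_coeff_prod)
  show "degree (\<Prod>z\<in>{z. z ^ N = 1}. [:-z, 1:] :: complex poly) = degree (monom 1 N - 1 :: complex poly)"
    using fin card_roots_unity_eq[OF N] deg by (subst degree_prod_eq_sum_degree) auto
  show "(\<Prod>z\<in>{z. z ^ N = 1}. [:-z, 1:]) dvd (monom 1 N - 1 :: complex poly)"
    using fin by (intro prod_linear_factors_dvd) (auto simp: poly_monom)
qed

lemma prod_cyclotomic_complex:
  assumes N: "0 < N"
  shows "(\<Prod>d | d dvd N. cyclotomic_complex d) = monom 1 N - 1"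
proof -
  have "(\<Prod>d | d dvd N. cyclotomic_complex d) = (\<Prod>z\<in>(\<Union>d\<in>{d. d dvd N}. primitive_roots d). [:-z, 1:])"
    unfolding cyclotomic_complex_def
  proof (rule prod.UNION_disjoint[symmetric])
    show "finite {d. d dvd N}" using N by simp
    show "\<forall>d\<in>{d. d dvd N}. finite (primitive_roots d)" by (simp add: primitive_roots_def)
    show "\<forall>d\<in>{d. d dvd N}. \<forall>d'\<in>{d. d dvd N}. d \<noteq> d' \<longrightarrow> primitive_roots d \<inter> primitive_roots d' = {}"
      using N primitive_roots_disjoint by (metis disjoint_iff dvd_0_left_iff mem_Collect_eq neq0_conv)
  qed
  also have "\<dots> = monom 1 N - 1"
    using monom_one_minus_one_eq_prod_roots_unity[OF N] roots_unity_eq_Union_primitive_roots[OF N] by simp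
  finally show ?thesis .
qed

lemma lead_coeff_cyclotomic_complex: "lead_coeff (cyclotomic_complex n) = 1"
  by (simp add: cyclotomic_complex_def lead_coeff_prod)

lemma monic_divmod_exists:
  fixes F G :: "'a::comm_ring_1 poly"
  assumes "lead_coeff G = 1"
  obtains Q R where "F = G * Q + R" "R = 0 \<or> degree R < degree G"
proof -
  have "G \<noteq> 0" using assms by auto
  obtain Q R where QR: "pseudo_divmod F G = (Q, R)" by (cases "pseudo_divmod F G")
  show ?thesis using pseudo_divmod[OF \<open>G \<noteq> 0\<close> QR] assms that by simp
qed

lemma dvd_small_degree_eq_0:
  fixes G R :: "'a::idom poly"
  assumes "G dvd R" "R = 0 \<or> degree R < degree G"
  shows "R = 0"
proof (rule ccontr)
  assume "R \<noteq> 0"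
  with assms(1) have "degree G \<le> degree R" by (rule dvd_imp_degree_le)
  with assms(2) \<open>R \<noteq> 0\<close> show False by simp
qed

lemma quotient_by_monic_integral:
  fixes F G :: "int poly" and H :: "complex poly"
  assumes G: "lead_coeff G = 1" and FGH: "cpoly F = cpoly G * H"
  shows "\<exists>Q. H = cpoly Q"
proof -
  obtain Q R where "F = G * Q + R" and R: "R = 0 \<or> degree R < degree G"
    using monic_divmod_exists[OF G] by blast
  then have eq: "cpoly R = cpoly G * (H - cpoly Q)"
    using FGH by (simp add: cpoly_add cpoly_mult algebra_simps)
  then have "cpoly G dvd cpoly R" by (rule dvdI)
  moreover have "cpoly R = 0 \<or> degree (cpoly R) < degree (cpoly G)" using R by auto
  ultimately have "cpoly R = 0" by (rule dvd_small_degree_eq_0)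
  moreover have "cpoly G \<noteq> 0" using G cpoly_eq_iff[of G 0] by auto
  ultimately show ?thesis using eq by auto
qed

lemma cyclotomic_complex_integral: "\<exists>F. cpoly F = cyclotomic_complex n"
proof (induction n rule: less_induct)
  case (less n)
  show ?case
  proof (cases "n = 0")
    case True
    then show ?thesis by (intro exI[of _ 1]) (simp add: cyclotomic_complex_def primitive_roots_def)
  next
    case False
    define D where "D = {d. d dvd n \<and> d < n}"
    have "\<forall>d\<in>D. \<exists>F. cpoly F = cyclotomic_complex d" using less by (simp add: D_def)
    then obtain F where F: "\<And>d. d \<in> D \<Longrightarrow> cpoly (F d) = cyclotomic_complex d" by metis
    have cpoly_G: "cpoly (\<Prod>d\<in>D. F d) = (\<Prod>d\<in>D. cyclotomic_complex d)"
      by (simp add: cpoly_prod F)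
    have "lead_coeff (cpoly (\<Prod>d\<in>D. F d)) = 1"
      by (simp add: cpoly_G lead_coeff_prod lead_coeff_cyclotomic_complex)
    then have G: "lead_coeff (\<Prod>d\<in>D. F d) = 1"
      by (simp only: lead_coeff_cpoly of_int_eq_1_iff)
    have "{d. d dvd n} = insert n D" using False by (auto simp: D_def dest: dvd_imp_le)
    then have "monom 1 n - 1 = cyclotomic_complex n * (\<Prod>d\<in>D. cyclotomic_complex d)"
      using prod_cyclotomic_complex[of n] False by (simp add: D_def)
    then have "cpoly (monom 1 n - 1) = cpoly (\<Prod>d\<in>D. F d) * cyclotomic_complex n"
      by (simp add: cpoly_G cpoly_diff map_poly_monom mult.commute)
    then show ?thesis using quotient_by_monic_integral[OF G] by metis
  qed
qed

lemma cpoly_cyclotomic: "cpoly (cyclotomic n) = cyclotomic_complex n"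
proof -
  have "cyclotomic_complex n = (\<Prod>k\<in>{k\<in>{1..n}. coprime k n}. [:- cis (2 * pi * real k / real n), 1:])"
    unfolding cyclotomic_complex_def primitive_roots_def
    by (subst prod.reindex[OF inj_on_root_unity_totatives])
       (auto simp: root_unity_def totatives_def intro!: prod.cong)
  moreover have "\<exists>!p. cpoly p = cyclotomic_complex n"
    using cyclotomic_complex_integral cpoly_eq_iff by metis
  ultimately show ?thesis
    unfolding cyclotomic_def by (metis (mono_tags, lifting) theI')
qed

lemma lead_coeff_cyclotomic: "lead_coeff (cyclotomic n) = 1"
  using lead_coeff_cpoly[of "cyclotomic n"] by (simp add: cpoly_cyclotomic lead_coeff_cyclotomic_complex)

lemma cyclotomic_neq_0: "cyclotomic n \<noteq> 0"
  using lead_coeff_cyclotomic[of n] by auto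

lemma prod_cyclotomic:
  assumes "0 < N"
  shows "(\<Prod>d | d dvd N. cyclotomic d) = monom 1 N - 1"
  using prod_cyclotomic_complex[OF assms]
  by (simp flip: cpoly_eq_iff add: cpoly_prod cpoly_cyclotomic cpoly_diff map_poly_monom)

lemma poly_cyclotomic_complex_primitive_root:
  assumes "0 < n"
  shows "poly (cyclotomic_complex k) (root_unity n 1) = 0 \<longleftrightarrow> k = n"
proof -
  have z: "root_unity n 1 \<in> primitive_roots n" using assms by (simp add: primitive_roots_def)
  have "poly (cyclotomic_complex k) (root_unity n 1) = 0 \<longleftrightarrow> root_unity n 1 \<in> primitive_roots k"
    by (simp add: cyclotomic_complex_def poly_prod primitive_roots_def)
  also have "\<dots> \<longleftrightarrow> k = n"
    using primitive_roots_disjoint[OF _ assms] z by (metis empty_iff image_empty neq0_conv primitive_roots_def totatives_0)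
  finally show ?thesis .
qed

lemma cyclotomic_not_dvd_power_prod:
  assumes "0 < n" "finite S" "n \<notin> S"
  shows "\<not> cyclotomic n dvd (\<Prod>k\<in>S. cyclotomic k) ^ j"
proof
  assume "cyclotomic n dvd (\<Prod>k\<in>S. cyclotomic k) ^ j"
  then have "cyclotomic_complex n dvd (\<Prod>k\<in>S. cyclotomic_complex k) ^ j"
    using cpoly_dvd by (fastforce simp: cpoly_power cpoly_prod cpoly_cyclotomic)
  then obtain w where w: "(\<Prod>k\<in>S. cyclotomic_complex k) ^ j = cyclotomic_complex n * w"
    by (elim dvdE)
  have "poly ((\<Prod>k\<in>S. cyclotomic_complex k) ^ j) (root_unity n 1) = 0"
    unfolding w using poly_cyclotomic_complex_primitive_root[OF assms(1), of n] by simp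
  moreover have "\<forall>k\<in>S. poly (cyclotomic_complex k) (root_unity n 1) \<noteq> 0"
    using assms(3) poly_cyclotomic_complex_primitive_root[OF assms(1)] by auto
  then have "poly (\<Prod>k\<in>S. cyclotomic_complex k) (root_unity n 1) \<noteq> 0"
    using assms(2) by (simp add: poly_prod)
  ultimately show False by simp
qed

section \<open>Cyclotomic polynomials modulo a prime\<close>

lemma pcompose_monom_one: "pcompose (monom 1 n) (q :: 'a::comm_ring_1 poly) = q ^ n"
  by (induction n) (simp_all add: monom_Suc pcompose_pCons pcompose_mult pcompose_1)

lemma pcompose_monom_one_minus_one:
  "pcompose (monom 1 N - 1) (monom 1 p :: 'a::comm_ring_1 poly) = monom 1 (N * p) - 1"
  by (simp add: pcompose_diff pcompose_monom_one pcompose_1 monom_power mult.commute)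

lemma divisors_mult_prime:
  fixes p N :: nat
  assumes p: "prime p"
  shows "{e. e dvd N * p} = (\<lambda>d. d * p) ` {d. d dvd N} \<union> {d. d dvd N \<and> \<not> p dvd d}"
proof (intro equalityI subsetI)
  fix e assume e: "e \<in> {e. e dvd N * p}"
  show "e \<in> (\<lambda>d. d * p) ` {d. d dvd N} \<union> {d. d dvd N \<and> \<not> p dvd d}"
  proof (cases "p dvd e")
    case True
    then obtain d where "e = d * p" by (metis dvdE mult.commute)
    then show ?thesis using e p by (auto simp: prime_gt_0_nat)
  next
    case False
    then have "coprime e p" using p by (metis coprime_commute prime_imp_coprime)
    then show ?thesis using e False by (simp add: coprime_dvd_mult_left_iff)
  qed
qed auto

lemma prod_cyclotomic_mult_prime:
  fixes p N :: nat
  assumes p: "prime p" and N: "0 < N"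
  shows "(\<Prod>e | e dvd N * p. cyclotomic e)
       = (\<Prod>d | d dvd N. cyclotomic (d * p) * (if p dvd d then 1 else cyclotomic d))"
proof -
  have "inj_on (\<lambda>d. d * p) {d. d dvd N}" using p by (auto simp: inj_on_def prime_gt_0_nat)
  moreover have "(\<lambda>d. d * p) ` {d. d dvd N} \<inter> {d. d dvd N \<and> \<not> p dvd d} = {}" by auto
  ultimately have "(\<Prod>e | e dvd N * p. cyclotomic e)
      = (\<Prod>d | d dvd N. cyclotomic (d * p)) * (\<Prod>d | d dvd N \<and> \<not> p dvd d. cyclotomic d)"
    using N unfolding divisors_mult_prime[OF p] by (simp add: prod.union_disjoint prod.reindex)
  also have "(\<Prod>d | d dvd N \<and> \<not> p dvd d. cyclotomic d) = (\<Prod>d | d dvd N. if p dvd d then 1 else cyclotomic d)"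
    using N by (subst prod.If_cases) (auto intro!: prod.cong)
  finally show ?thesis by (simp add: prod.distrib)
qed

lemma cyclotomic_pcompose_prime:
  assumes p: "prime p" and "0 < N"
  shows "pcompose (cyclotomic N) (monom 1 p)
       = cyclotomic (N * p) * (if p dvd N then 1 else cyclotomic N)"
  using \<open>0 < N\<close>
proof (induction N rule: less_induct)
  case (less N)
  define T where "T d = cyclotomic (d * p) * (if p dvd d then 1 else cyclotomic d)" for d
  define D where "D = {d. d dvd N \<and> d < N}"
  have D: "finite D" "N \<notin> D" "{d. d dvd N} = insert N D"
    using less.prems by (auto simp: D_def dest: dvd_imp_le)
  have IH: "(\<Prod>d\<in>D. pcompose (cyclotomic d) (monom 1 p)) = (\<Prod>d\<in>D. T d)"
    using less.IH by (intro prod.cong) (auto simp: D_def T_def intro: Nat.gr0I)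
  have "(\<Prod>d | d dvd N. pcompose (cyclotomic d) (monom 1 p)) = pcompose (monom 1 N - 1) (monom 1 p)"
    by (simp only: prod_cyclotomic[OF less.prems, symmetric] pcompose_prod)
  also have "\<dots> = (\<Prod>e | e dvd N * p. cyclotomic e)"
    using less.prems p by (simp add: pcompose_monom_one_minus_one prod_cyclotomic prime_gt_0_nat)
  also have "\<dots> = (\<Prod>d | d dvd N. T d)"
    unfolding T_def by (rule prod_cyclotomic_mult_prime[OF p less.prems])
  finally have "pcompose (cyclotomic N) (monom 1 p) * (\<Prod>d\<in>D. T d) = T N * (\<Prod>d\<in>D. T d)"
    unfolding D(3) by (simp add: D IH)
  moreover have "(\<Prod>d\<in>D. T d) \<noteq> 0" using D by (simp add: T_def cyclotomic_neq_0)
  ultimately show ?case by (simp add: T_def)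
qed

lemma dvd_diff_swap: "d dvd a - b \<longleftrightarrow> d dvd b - (a :: 'a::comm_ring_1)"
  by (metis dvd_minus_iff minus_diff_eq)

(* The library's cong needs a Euclidean ring; polynomials over Z are not one. *)
definition cong_dvd :: "'a::comm_ring_1 \<Rightarrow> 'a \<Rightarrow> 'a \<Rightarrow> bool" where
  "cong_dvd d a b \<longleftrightarrow> d dvd a - b"

lemma cong_dvd_refl: "cong_dvd d a a"
  by (simp add: cong_dvd_def)

lemma cong_dvd_sym: "cong_dvd d a b \<Longrightarrow> cong_dvd d b a"
  by (simp add: cong_dvd_def dvd_diff_swap)

lemma cong_dvd_trans [trans]: "cong_dvd d a b \<Longrightarrow> cong_dvd d b c \<Longrightarrow> cong_dvd d a c"
  unfolding cong_dvd_def by (drule (1) dvd_add) simp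

lemma cong_dvd_add: "cong_dvd d a b \<Longrightarrow> cong_dvd d a' b' \<Longrightarrow> cong_dvd d (a + a') (b + b')"
  unfolding cong_dvd_def by (drule (1) dvd_add) (simp add: algebra_simps)

lemma cong_dvd_mult: "cong_dvd d a b \<Longrightarrow> cong_dvd d a' b' \<Longrightarrow> cong_dvd d (a * a') (b * b')"
proof -
  assume "cong_dvd d a b" "cong_dvd d a' b'"
  then have "d dvd (a - b) * a' + b * (a' - b')" unfolding cong_dvd_def by (intro dvd_add dvd_mult2 dvd_mult)
  then show ?thesis unfolding cong_dvd_def by (simp add: algebra_simps)
qed

lemma cong_dvd_power: "cong_dvd d a b \<Longrightarrow> cong_dvd d (a ^ k) (b ^ k)"
  by (induction k) (simp_all add: cong_dvd_refl cong_dvd_mult)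

lemma freshmans_dream_cong:
  fixes a b :: "'a::comm_ring_1"
  assumes p: "prime p"
  shows "cong_dvd (of_nat p) ((a + b) ^ p) (a ^ p + b ^ p)"
proof -
  have "0 < p" using p by (simp add: prime_gt_0_nat)
  define f where "f k = of_nat (p choose k) * a ^ k * b ^ (p - k)" for k
  have "{..p} = insert p (insert 0 {1..<p})" using \<open>0 < p\<close> by auto
  then have "(a + b) ^ p - (a ^ p + b ^ p) = (\<Sum>k\<in>{1..<p}. f k)"
    using \<open>0 < p\<close> by (simp add: binomial_ring f_def)
  moreover have "of_nat p dvd (\<Sum>k\<in>{1..<p}. f k)"
  proof (rule dvd_sum)
    fix k assume "k \<in> {1..<p}"
    then have "p dvd (p choose k)" using p by (intro dvd_choose_prime) auto
    then show "of_nat p dvd f k" by (auto simp: f_def elim!: dvdE)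
  qed
  ultimately show ?thesis unfolding cong_dvd_def by simp
qed

lemma fermat_little_cong_int:
  fixes a :: int
  assumes p: "prime p"
  shows "cong_dvd (int p) (a ^ p) a"
proof -
  have nat: "cong_dvd (int p) (int n ^ p) (int n)" for n
  proof (induction n)
    case 0
    then show ?case using p by (simp add: cong_dvd_refl zero_power prime_gt_0_nat)
  next
    case (Suc n)
    have "cong_dvd (int p) ((int n + 1) ^ p) (int n ^ p + 1 ^ p)"
      using freshmans_dream_cong[OF p, of "int n" 1] by simp
    then show ?case
      using cong_dvd_trans[OF _ cong_dvd_add[OF Suc cong_dvd_refl[of _ 1]]] by (simp add: add.commute)
  qed
  have a: "cong_dvd (int p) a (a mod int p)"
    by (simp add: cong_dvd_def minus_mod_eq_mult_div)
  obtain n where n: "a mod int p = int n"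
    using p by (metis nonneg_int_cases pos_mod_sign of_nat_0_less_iff prime_gt_0_nat)
  have "cong_dvd (int p) (a ^ p) (int n ^ p)" using a n by (simp add: cong_dvd_power)
  also have "cong_dvd (int p) \<dots> (int n)" by (rule nat)
  also have "cong_dvd (int p) \<dots> a" using a n by (simp add: cong_dvd_sym)
  finally show ?thesis .
qed

lemma frobenius_cong:
  fixes f :: "int poly"
  assumes p: "prime p"
  shows "cong_dvd [:int p:] (f ^ p) (pcompose f (monom 1 p))"
proof (induction f)
  case 0
  then show ?case using p by (simp add: cong_dvd_refl zero_power prime_gt_0_nat)
next
  case (pCons a f)
  have const: "cong_dvd [:int p:] ([:a:] ^ p) [:a:]"
    using fermat_little_cong_int[OF p, of a] by (simp add: cong_dvd_def poly_const_pow)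
  have "pCons a f = [:a:] + monom 1 1 * f"
    by (simp add: monom_altdef pCons_eq_iff poly_eq_iff coeff_pCons split: nat.split)
  then have "cong_dvd [:int p:] ((pCons a f) ^ p) ([:a:] ^ p + (monom 1 1 * f) ^ p)"
    using freshmans_dream_cong[OF p, of "[:a:]" "monom 1 1 * f"] by (simp add: of_nat_poly)
  also have "cong_dvd [:int p:] \<dots> ([:a:] + monom 1 p * pcompose f (monom 1 p))"
    using const pCons.IH
    by (auto intro!: cong_dvd_add cong_dvd_mult cong_dvd_refl simp: power_mult_distrib monom_power)
  also have "[:a:] + monom 1 p * pcompose f (monom 1 p) = pcompose (pCons a f) (monom 1 p)"
    by (simp add: pcompose_pCons)
  finally show ?case .
qed

lemma cong_dvd_cancel_monic:
  assumes p: "prime p" and F: "lead_coeff F = 1"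
    and "cong_dvd [:int p:] (F * A) (F * B)"
  shows "cong_dvd [:int p:] A B"
proof -
  have "prime_elem [:int p:]" using p by (simp add: prime_elem_const_poly_iff)
  moreover have "\<not> [:int p:] dvd F"
  proof
    assume "[:int p:] dvd F"
    then have "int p dvd lead_coeff F" by (simp add: const_poly_dvd_iff)
    then show False using F p by (simp add: prime_gt_1_nat)
  qed
  moreover have "[:int p:] dvd F * (A - B)"
    using assms(3) by (simp add: cong_dvd_def algebra_simps)
  ultimately show ?thesis by (simp add: cong_dvd_def prime_elem_dvd_mult_iff)
qed

lemma cyclotomic_mult_prime_cong:
  assumes p: "prime p" and N: "0 < N"
  shows "\<exists>E>0. cong_dvd [:int p:] (cyclotomic (N * p)) (cyclotomic N ^ E)"
proof -
  have frob: "cong_dvd [:int p:] (cyclotomic (N * p) * (if p dvd N then 1 else cyclotomic N)) (cyclotomic N ^ p)"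
    using frobenius_cong[OF p, of "cyclotomic N"] cyclotomic_pcompose_prime[OF p N] by (simp add: cong_dvd_sym)
  show ?thesis
  proof (cases "p dvd N")
    case True
    then show ?thesis using frob p by (intro exI[of _ p]) (simp add: prime_gt_0_nat)
  next
    case False
    obtain q where q: "p = Suc q" using p prime_gt_0_nat gr0_implies_Suc by blast
    have "cong_dvd [:int p:] (cyclotomic N * cyclotomic (N * p)) (cyclotomic N * cyclotomic N ^ q)"
      using frob False by (simp add: q mult.commute)
    then have "cong_dvd [:int p:] (cyclotomic (N * p)) (cyclotomic N ^ q)"
      by (rule cong_dvd_cancel_monic[OF p lead_coeff_cyclotomic])
    moreover have "0 < q" using prime_ge_2_nat[OF p] q by simp
    ultimately show ?thesis by blast
  qed
qed

lemma cyclotomic_mult_prime_power_cong: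
  assumes p: "prime p" and N: "0 < N"
  shows "\<exists>E>0. cong_dvd [:int p:] (cyclotomic (N * p ^ j)) (cyclotomic N ^ E)"
proof (induction j)
  case 0
  show ?case by (intro exI[of _ 1]) (simp add: cong_dvd_refl)
next
  case (Suc j)
  then obtain E where "0 < E" and E: "cong_dvd [:int p:] (cyclotomic (N * p ^ j)) (cyclotomic N ^ E)"
    by blast
  have "0 < N * p ^ j" using N p by (simp add: prime_gt_0_nat)
  then obtain E' where "0 < E'" and E': "cong_dvd [:int p:] (cyclotomic (N * p ^ j * p)) (cyclotomic (N * p ^ j) ^ E')"
    using cyclotomic_mult_prime_cong[OF p] by blast
  have "cyclotomic (N * p ^ Suc j) = cyclotomic (N * p ^ j * p)" by (simp add: mult_ac)
  then have "cong_dvd [:int p:] (cyclotomic (N * p ^ Suc j)) (cyclotomic N ^ (E * E'))"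
    using cong_dvd_trans[OF E' cong_dvd_power[OF E]] by (simp add: power_mult)
  then show ?case using \<open>0 < E\<close> \<open>0 < E'\<close> by (intro exI[of _ "E * E'"]) simp
qed

section \<open>Two-generator ideals\<close>

definition ideal2 :: "'a::comm_ring_1 \<Rightarrow> 'a \<Rightarrow> 'a set" where
  "ideal2 a b = {a * u + b * v | u v. True}"

lemma ideal2_add: "x \<in> ideal2 a b \<Longrightarrow> y \<in> ideal2 a b \<Longrightarrow> x + y \<in> ideal2 a b"
proof -
  assume "x \<in> ideal2 a b" "y \<in> ideal2 a b"
  then obtain u v u' v' where "x = a * u + b * v" "y = a * u' + b * v'"
    unfolding ideal2_def by blast
  then have "x + y = a * (u + u') + b * (v + v')" by (simp add: algebra_simps)
  then show ?thesis unfolding ideal2_def by blast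
qed

lemma ideal2_mult_left: "x \<in> ideal2 a b \<Longrightarrow> y * x \<in> ideal2 a b"
proof -
  assume "x \<in> ideal2 a b"
  then obtain u v where "x = a * u + b * v" unfolding ideal2_def by blast
  then have "y * x = a * (y * u) + b * (y * v)" by (simp add: algebra_simps)
  then show ?thesis unfolding ideal2_def by blast
qed

lemma ideal2_diff: "x \<in> ideal2 a b \<Longrightarrow> y \<in> ideal2 a b \<Longrightarrow> x - y \<in> ideal2 a b"
  using ideal2_add[of x a b "(-1) * y"] ideal2_mult_left[of y a b "-1"] by simp

lemma ideal2_dvd: "x \<in> ideal2 a b \<Longrightarrow> x dvd y \<Longrightarrow> y \<in> ideal2 a b"
  by (auto elim!: dvdE simp: mult.commute[of x] intro: ideal2_mult_left)

lemma ideal2_generator_left: "a * w \<in> ideal2 a b"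
proof -
  have "a * w = a * w + b * 0" by simp
  then show ?thesis unfolding ideal2_def by blast
qed

lemma ideal2_generator_right: "b * w \<in> ideal2 a b"
proof -
  have "b * w = a * 0 + b * w" by simp
  then show ?thesis unfolding ideal2_def by blast
qed

lemma ideal2_antimono: "a dvd a' \<Longrightarrow> x \<in> ideal2 a' b \<Longrightarrow> x \<in> ideal2 a b"
proof -
  assume "a dvd a'" "x \<in> ideal2 a' b"
  then obtain k u v where "a' = a * k" "x = a' * u + b * v" unfolding ideal2_def by (auto elim: dvdE)
  then have "x = a * (k * u) + b * v" by (simp add: mult.assoc)
  then show ?thesis unfolding ideal2_def by blast
qed

lemma ideal2_cong: "cong_dvd a x y \<Longrightarrow> y \<in> ideal2 a b \<Longrightarrow> x \<in> ideal2 a b"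
proof -
  assume "cong_dvd a x y" "y \<in> ideal2 a b"
  then obtain k where "x - y = a * k" unfolding cong_dvd_def by (elim dvdE)
  then have "x = y + a * k" by (simp add: algebra_simps)
  then show ?thesis using \<open>y \<in> ideal2 a b\<close> by (simp add: ideal2_add ideal2_generator_left)
qed

lemma ideal2_mult: "x \<in> ideal2 a b \<Longrightarrow> y \<in> ideal2 a' b \<Longrightarrow> x * y \<in> ideal2 (a * a') b"
proof -
  assume "x \<in> ideal2 a b" "y \<in> ideal2 a' b"
  then obtain u v u' v' where "x = a * u + b * v" "y = a' * u' + b * v'"
    unfolding ideal2_def by blast
  then have "x * y = (a * a') * (u * u') + b * (v * y + a * u * v')"
    by (simp add: algebra_simps)
  then show ?thesis unfolding ideal2_def by blast
qed

lemma ideal2_power: "x \<in> ideal2 a b \<Longrightarrow> x ^ k \<in> ideal2 (a ^ k) b"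
proof (induction k)
  case 0
  show ?case using ideal2_generator_left[of 1 1 b] by simp
qed (simp add: ideal2_mult)

lemma ideal2_cancel_one_minus_nilpotent:
  assumes "y * (1 - x) \<in> ideal2 a b" "x ^ N \<in> ideal2 a b"
  shows "y \<in> ideal2 a b"
proof -
  have "(\<Sum>i<N. x ^ i) * (y * (1 - x)) + y * x ^ N \<in> ideal2 a b"
    by (rule ideal2_add[OF ideal2_mult_left[OF assms(1)] ideal2_mult_left[OF assms(2)]])
  moreover have "(\<Sum>i<N. x ^ i) * (y * (1 - x)) = y * (1 - x ^ N)"
    by (simp add: one_diff_power_eq mult_ac)
  ultimately show ?thesis by (simp add: algebra_simps)
qed

lemma int_dvd_all_powers_imp_zero:
  fixes c p :: int
  assumes "2 \<le> p" "\<And>a. p ^ a dvd c"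
  shows "c = 0"
proof (rule ccontr)
  assume "c \<noteq> 0"
  define a where "a = nat \<bar>c\<bar>"
  have "\<bar>p ^ a\<bar> \<le> \<bar>c\<bar>" using assms(2) \<open>c \<noteq> 0\<close> by (intro dvd_imp_le_int) auto
  moreover have "int a < 2 ^ a" by (metis less_exp of_nat_less_iff of_nat_numeral of_nat_power)
  moreover have "(2::int) ^ a \<le> p ^ a" using assms(1) by (intro power_mono) auto
  ultimately show False unfolding a_def by simp
qed

(* The remainder of X modulo the monic G is divisible by every power of p. *)
lemma in_ideal2_const_powers_imp_dvd:
  fixes G X :: "int poly" and p :: int
  assumes p: "2 \<le> p" and G: "lead_coeff G = 1"
    and X: "\<And>a. X \<in> ideal2 ([:p:] ^ a) G"
  shows "G dvd X"
proof -
  obtain Q R where XQR: "X = G * Q + R" and R: "R = 0 \<or> degree R < degree G"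
    using monic_divmod_exists[OF G] by blast
  have "[:p ^ a:] dvd R" for a
  proof -
    obtain u v where X': "X = [:p ^ a:] * u + G * v"
      using X[of a] unfolding ideal2_def by (auto simp: poly_const_pow)
    obtain Q' R' where u: "u = G * Q' + R'" and R': "R' = 0 \<or> degree R' < degree G"
      using monic_divmod_exists[OF G] by blast
    have "R = X - G * Q" using XQR by simp
    also have "\<dots> = [:p ^ a:] * (G * Q' + R') + G * v - G * Q" using X' u by simp
    finally have "R - [:p ^ a:] * R' = G * ([:p ^ a:] * Q' + v - Q)"
      by (simp add: algebra_simps smult_add_right)
    moreover have "R - [:p ^ a:] * R' = 0 \<or> degree (R - [:p ^ a:] * R') < degree G"
    proof (cases "degree G = 0")
      case True
      then show ?thesis using R R' by simp
    next
      case False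
      then have "degree R < degree G" "degree (smult (p ^ a) R') < degree G"
        using R R' degree_smult_le[of "p ^ a" R'] by auto
      then show ?thesis by (simp add: degree_diff_less)
    qed
    ultimately have "R - [:p ^ a:] * R' = 0" by (intro dvd_small_degree_eq_0[of G] dvdI)
    then have "R = [:p ^ a:] * R'" by (simp only: right_minus_eq)
    then show ?thesis by (simp only: dvd_triv_left)
  qed
  then have "coeff R k = 0" for k
    using int_dvd_all_powers_imp_zero[OF p] by (simp add: const_poly_dvd_iff)
  then have "R = 0" by (simp add: poly_eq_iff)
  then show ?thesis using XQR by simp
qed

section \<open>Truncated power series and the inverse limit\<close>

definition partial_series :: "'a::comm_semiring_1 \<Rightarrow> (nat \<Rightarrow> bool) \<Rightarrow> nat \<Rightarrow> 'a" where
  "partial_series h c A = (\<Sum>i<A. of_bool (c i) * h ^ i)"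

lemma power_dvd_partial_series_diff:
  fixes h :: "'a::comm_ring_1"
  assumes "A \<le> B"
  shows "h ^ A dvd partial_series h c B - partial_series h c A"
proof -
  have "partial_series h c B - partial_series h c A = (\<Sum>i\<in>{A..<B}. of_bool (c i) * h ^ i)"
    unfolding partial_series_def
    by (rule sum_diff_nat_ivl[of 0 A B, unfolded atLeast0LessThan]) (use assms in auto)
  also have "h ^ A dvd \<dots>" by (intro dvd_sum) (auto intro: dvd_mult le_imp_power_dvd)
  finally show ?thesis .
qed

lemma dvd_partial_series_diff:
  fixes h :: "'a::comm_ring_1"
  assumes "f dvd h ^ A" "f dvd h ^ B"
  shows "f dvd partial_series h c A - partial_series h c B"
proof (cases "A \<le> B")
  case True
  have "f dvd partial_series h c B - partial_series h c A"
    using assms(1) power_dvd_partial_series_diff[OF True] by (rule dvd_trans)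
  then show ?thesis by (simp only: dvd_diff_swap)
next
  case False
  then show ?thesis
    using assms(2) power_dvd_partial_series_diff[of B A] by (auto intro: dvd_trans)
qed

lemma partial_series_diff_first_difference:
  fixes h :: "'a::comm_ring_1"
  assumes below: "\<forall>i<j. c i = c' i" and "j < A"
  shows "\<exists>W. partial_series h c A - partial_series h c' A
              = (of_bool (c j) - of_bool (c' j)) * h ^ j + h ^ Suc j * W"
proof -
  define t where "t i = (of_bool (c i) - of_bool (c' i)) * h ^ i" for i
  have "partial_series h c A - partial_series h c' A = (\<Sum>i<A. t i)"
    unfolding partial_series_def t_def by (simp add: left_diff_distrib sum_subtractf)
  also have "\<dots> = (\<Sum>i<Suc j. t i) + (\<Sum>i\<in>{Suc j..<A}. t i)"
    using sum.atLeastLessThan_concat[of 0 "Suc j" A t] \<open>j < A\<close>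
    by (simp only: atLeast0LessThan)
  finally have diff: "partial_series h c A - partial_series h c' A
      = (\<Sum>i<Suc j. t i) + (\<Sum>i\<in>{Suc j..<A}. t i)" .
  have "(\<Sum>i<j. t i) = 0" using below by (intro sum.neutral) (simp add: t_def)
  then have "(\<Sum>i<Suc j. t i) = t j" by simp
  moreover have "h ^ Suc j dvd (\<Sum>i\<in>{Suc j..<A}. t i)"
    unfolding t_def by (intro dvd_sum dvd_mult le_imp_power_dvd) auto
  then obtain W where "(\<Sum>i\<in>{Suc j..<A}. t i) = h ^ Suc j * W" by (elim dvdE)
  ultimately have "partial_series h c A - partial_series h c' A = t j + h ^ Suc j * W"
    using diff by simp
  then show ?thesis unfolding t_def by blast
qed

lemma cyclotomic_power_in_Phi_star: "k \<in> S \<Longrightarrow> cyclotomic k ^ a \<in> Phi_star S"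
  unfolding Phi_star_def by (intro CollectI exI[of _ "replicate_mset a k"]) auto

lemma Phi_star_mult: "f \<in> Phi_star S \<Longrightarrow> g \<in> Phi_star S \<Longrightarrow> f * g \<in> Phi_star S"
proof -
  assume "f \<in> Phi_star S" "g \<in> Phi_star S"
  then obtain M M' where "f = prod_mset (image_mset cyclotomic M)" "set_mset M \<subseteq> S"
    and "g = prod_mset (image_mset cyclotomic M')" "set_mset M' \<subseteq> S"
    unfolding Phi_star_def by blast
  then have "f * g = prod_mset (image_mset cyclotomic (M + M'))" "set_mset (M + M') \<subseteq> S" by auto
  then show ?thesis unfolding Phi_star_def by blast
qed

lemma Phi_star_mono: "S \<subseteq> T \<Longrightarrow> Phi_star S \<subseteq> Phi_star T"
  unfolding Phi_star_def by blast

lemma Phi_star_dvd_power_prod: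
  assumes "finite S" "f \<in> Phi_star S"
  shows "\<exists>N. f dvd (\<Prod>k\<in>S. cyclotomic k) ^ N"
proof -
  obtain M where M: "f = prod_mset (image_mset cyclotomic M)" "set_mset M \<subseteq> S"
    using assms(2) unfolding Phi_star_def by blast
  have "prod_mset (image_mset cyclotomic M) dvd (\<Prod>k\<in>S. cyclotomic k) ^ size M"
    using M(2)
  proof (induction M)
    case (add x M)
    then have "cyclotomic x dvd (\<Prod>k\<in>S. cyclotomic k)" using assms(1) by (intro dvd_prodI) auto
    with add show ?case by (auto intro: mult_dvd_mono)
  qed simp
  then show ?thesis using M(1) by blast
qed

(* The element sum_i c_i h^i of the inverse limit: its component at f is the partial sum
   up to the least N with f dvd h^N. *)
definition series_family :: "int poly \<Rightarrow> (nat \<Rightarrow> bool) \<Rightarrow> int poly \<Rightarrow> int poly" where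
  "series_family h c f = partial_series h c (LEAST N. f dvd h ^ N)"

lemma series_family_cong_partial_series:
  assumes "f dvd h ^ A"
  shows "f dvd series_family h c f - partial_series h c A"
proof -
  have "f dvd h ^ (LEAST N. f dvd h ^ N)" using assms by (rule LeastI)
  then show ?thesis unfolding series_family_def using assms by (rule dvd_partial_series_diff)
qed

lemma invlim_elem_series_family:
  assumes "finite S"
  shows "invlim_elem S (series_family (\<Prod>k\<in>S. cyclotomic k) c)"
  unfolding invlim_elem_def
proof (intro ballI impI)
  fix f g assume "f \<in> Phi_star S" "g \<in> Phi_star S" "f dvd g"
  define h where "h = (\<Prod>k\<in>S. cyclotomic k)"
  obtain N where "g dvd h ^ N" using Phi_star_dvd_power_prod[OF assms \<open>g \<in> Phi_star S\<close>] h_def by blast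
  then have "g dvd h ^ (LEAST N. g dvd h ^ N)" by (rule LeastI)
  then have "f dvd h ^ (LEAST N. g dvd h ^ N)" using \<open>f dvd g\<close> dvd_trans by blast
  then have "f dvd series_family h c f - series_family h c g"
    using series_family_cong_partial_series unfolding series_family_def[of h c g] by blast
  then show "f dvd series_family h c g - series_family h c f"
    unfolding h_def by (simp only: dvd_diff_swap)
qed

lemma lift_component_in_ideal2:
  assumes S: "finite S" "m \<in> S"
    and x: "invlim_elem (insert n S) x" "\<forall>f\<in>Phi_star S. f dvd x f - series_family h c f"
    and h: "h = (\<Prod>k\<in>S. cyclotomic k)"
    and e: "cyclotomic m ^ e \<in> ideal2 d (cyclotomic n)"
  shows "x (cyclotomic n) - partial_series h c (e * a) \<in> ideal2 (d ^ a) (cyclotomic n)"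
proof -
  define f where "f = cyclotomic m ^ (e * a)"
  have f: "f \<in> Phi_star S" unfolding f_def using S(2) by (rule cyclotomic_power_in_Phi_star)
  then have f': "f \<in> Phi_star (insert n S)" using Phi_star_mono[of S "insert n S"] by blast
  have n: "cyclotomic n \<in> Phi_star (insert n S)"
    using cyclotomic_power_in_Phi_star[of n "insert n S" 1] by simp
  have fn: "f * cyclotomic n \<in> Phi_star (insert n S)" using f' n by (rule Phi_star_mult)
  have "cyclotomic m dvd h" unfolding h using S by (intro dvd_prodI)
  then have "f dvd h ^ (e * a)" unfolding f_def by (rule dvd_power_same)
  then have "f dvd series_family h c f - partial_series h c (e * a)"
    by (rule series_family_cong_partial_series)
  moreover have "f dvd x (f * cyclotomic n) - x f" using x(1) f' fn unfolding invlim_elem_def by simp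
  moreover have "f dvd x f - series_family h c f" using x(2) f by blast
  ultimately have "f dvd (x (f * cyclotomic n) - x f) + (x f - series_family h c f)
                        + (series_family h c f - partial_series h c (e * a))"
    by (intro dvd_add)
  then have "f dvd x (f * cyclotomic n) - partial_series h c (e * a)" by simp
  moreover have "f \<in> ideal2 (d ^ a) (cyclotomic n)"
    unfolding f_def power_mult using e by (rule ideal2_power)
  ultimately have A: "x (f * cyclotomic n) - partial_series h c (e * a) \<in> ideal2 (d ^ a) (cyclotomic n)"
    using ideal2_dvd by blast
  have "cyclotomic n dvd x (f * cyclotomic n) - x (cyclotomic n)"
    using x(1) n fn unfolding invlim_elem_def by simp
  then obtain w where "x (f * cyclotomic n) - x (cyclotomic n) = cyclotomic n * w" by (elim dvdE)
  then have B: "x (f * cyclotomic n) - x (cyclotomic n) \<in> ideal2 (d ^ a) (cyclotomic n)"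
    by (simp add: ideal2_generator_right)
  show ?thesis using ideal2_diff[OF A B] by simp
qed

lemma partial_series_agree_imp_power_in_ideal2:
  fixes h :: "'a::comm_ring_1"
  assumes h: "h ^ e \<in> ideal2 d G" "0 < e"
    and eq: "\<And>a. partial_series h c (e * a) - partial_series h c' (e * a) \<in> ideal2 (d ^ a) G"
    and "c \<noteq> c'"
  shows "\<exists>j. \<forall>a. h ^ j \<in> ideal2 (d ^ a) G"
proof
  define j where "j = (LEAST i. c i \<noteq> c' i)"
  have "\<exists>i. c i \<noteq> c' i" using \<open>c \<noteq> c'\<close> by auto
  then have "c j \<noteq> c' j" unfolding j_def by (rule LeastI_ex)
  have below: "\<forall>i<j. c i = c' i"
    using not_less_Least[of _ "\<lambda>i. c i \<noteq> c' i"] unfolding j_def by blast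
  define \<delta> :: 'a where "\<delta> = of_bool (c j) - of_bool (c' j)"
  have \<delta>: "\<delta> * \<delta> = 1" using \<open>c j \<noteq> c' j\<close> by (simp add: \<delta>_def of_bool_def)
  show "\<forall>a. h ^ j \<in> ideal2 (d ^ a) G"
  proof
    fix a
    have "1 * (a + j + 1) \<le> e * (a + j + 1)" using \<open>0 < e\<close> by (intro mult_le_mono1) simp
    then have j: "j < e * (a + j + 1)" by simp
    obtain W where W: "partial_series h c (e * (a + j + 1)) - partial_series h c' (e * (a + j + 1))
        = \<delta> * h ^ j + h ^ Suc j * W"
      using partial_series_diff_first_difference[OF below j, where h = h] unfolding \<delta>_def by (elim exE)
    have "\<delta> * h ^ j + h ^ Suc j * W \<in> ideal2 (d ^ a) G"
      using eq[of "a + j + 1"] unfolding W by (rule ideal2_antimono[rotated]) (simp add: le_imp_power_dvd)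
    then have "\<delta> * (\<delta> * h ^ j + h ^ Suc j * W) \<in> ideal2 (d ^ a) G" by (rule ideal2_mult_left)
    \<comment> \<open>the factor \<open>1 + \<delta> W h\<close> is a unit modulo the ideal, as \<open>h\<close> is nilpotent there\<close>
    moreover have "\<delta> * (\<delta> * h ^ j + h ^ Suc j * W) = (\<delta> * \<delta>) * h ^ j + h ^ j * (\<delta> * W * h)"
      by (simp add: algebra_simps)
    ultimately have "h ^ j * (1 - (- \<delta> * W * h)) \<in> ideal2 (d ^ a) G"
      using \<delta> by (simp add: algebra_simps)
    moreover have "(- \<delta> * W * h) ^ (e * a) = (- \<delta> * W) ^ (e * a) * (h ^ e) ^ a"
      by (simp only: power_mult_distrib power_mult)
    then have "(- \<delta> * W * h) ^ (e * a) \<in> ideal2 (d ^ a) G"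
      by (simp add: ideal2_mult_left ideal2_power[OF h(1)])
    ultimately show "h ^ j \<in> ideal2 (d ^ a) G" by (rule ideal2_cancel_one_minus_nilpotent)
  qed
qed

lemma not_inj_bool_sequences_to_int_poly: "\<not> inj (Z :: (nat \<Rightarrow> bool) \<Rightarrow> int poly)"
proof
  assume "inj Z"
  define F where "F = to_nat \<circ> coeffs \<circ> Z"
  have "inj (coeffs :: int poly \<Rightarrow> int list)" by (simp add: inj_def coeffs_eq_iff)
  then have "inj F" unfolding F_def using \<open>inj Z\<close> by (intro inj_compose) auto
  define d where "d k = (\<not> inv F k k)" for k
  have "inv F (F d) = d" using \<open>inj F\<close> by (rule inv_f_f)
  then have "inv F (F d) (F d) = d (F d)" by simp
  then show False by (simp add: d_def)
qed

section \<open>Non-surjectivity\<close>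

lemma not_rhoZ_surjective_insert:
  assumes S: "finite S" "m \<in> S" and n: "0 < n" "n \<notin> S" and p: "prime p"
    and e: "0 < e" "cyclotomic m ^ e \<in> ideal2 [:int p:] (cyclotomic n)"
  shows "\<not> rhoZ_surjective (insert n S) S"
proof
  assume surj: "rhoZ_surjective (insert n S) S"
  define h where "h = (\<Prod>k\<in>S. cyclotomic k)"
  have "\<forall>c. \<exists>x. invlim_elem (insert n S) x \<and> (\<forall>f\<in>Phi_star S. f dvd x f - series_family h c f)"
    using surj invlim_elem_series_family[OF S(1)] unfolding rhoZ_surjective_def h_def by blast
  then obtain x where x: "\<forall>c. invlim_elem (insert n S) (x c)
      \<and> (\<forall>f\<in>Phi_star S. f dvd x c f - series_family h c f)"
    by (rule choice[THEN exE])
  have approx: "x c (cyclotomic n) - partial_series h c (e * a) \<in> ideal2 ([:int p:] ^ a) (cyclotomic n)"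
    for c a using x by (intro lift_component_in_ideal2[OF S _ _ h_def e(2)]) auto
  have "cyclotomic m ^ e dvd h ^ e" unfolding h_def by (intro dvd_power_same dvd_prodI S)
  with e(2) have he: "h ^ e \<in> ideal2 [:int p:] (cyclotomic n)" by (rule ideal2_dvd)
  have "2 \<le> int p" using prime_ge_2_nat[OF p] by simp
  have "c = c'" if "x c (cyclotomic n) = x c' (cyclotomic n)" for c c'
  proof (rule ccontr)
    assume "c \<noteq> c'"
    have "partial_series h c (e * a) - partial_series h c' (e * a) \<in> ideal2 ([:int p:] ^ a) (cyclotomic n)"
      for a using ideal2_diff[OF approx[of c' a] approx[of c a]] that by (simp add: algebra_simps)
    then obtain j where "\<And>a. h ^ j \<in> ideal2 ([:int p:] ^ a) (cyclotomic n)"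
      using partial_series_agree_imp_power_in_ideal2[OF he e(1) _ \<open>c \<noteq> c'\<close>] by blast
    then have "cyclotomic n dvd h ^ j"
      by (rule in_ideal2_const_powers_imp_dvd[OF \<open>2 \<le> int p\<close> lead_coeff_cyclotomic])
    then show False using cyclotomic_not_dvd_power_prod[OF n(1) S(1) n(2)] unfolding h_def by blast
  qed
  then have "inj (\<lambda>c. x c (cyclotomic n))" by (simp add: inj_on_def)
  then show False using not_inj_bool_sequences_to_int_poly by blast
qed

lemma cyclotomic_prime_power_ratio_in_ideal2:
  assumes p: "prime p" and "0 < n" and "n = m * p ^ k \<or> m = n * p ^ k"
  shows "\<exists>e>0. cyclotomic m ^ e \<in> ideal2 [:int p:] (cyclotomic n)"
  using assms(3)
proof
  assume "n = m * p ^ k"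
  then have "0 < m" using \<open>0 < n\<close> by (auto intro: Nat.gr0I)
  then obtain E where "0 < E" and E: "cong_dvd [:int p:] (cyclotomic n) (cyclotomic m ^ E)"
    using cyclotomic_mult_prime_power_cong[OF p, of m k] \<open>n = m * p ^ k\<close> by blast
  have "cyclotomic n \<in> ideal2 [:int p:] (cyclotomic n)"
    using ideal2_generator_right[of "cyclotomic n" 1] by simp
  then have "cyclotomic m ^ E \<in> ideal2 [:int p:] (cyclotomic n)"
    by (rule ideal2_cong[OF cong_dvd_sym[OF E]])
  then show ?thesis using \<open>0 < E\<close> by blast
next
  assume "m = n * p ^ k"
  then obtain E where "0 < E" and E: "cong_dvd [:int p:] (cyclotomic m) (cyclotomic n ^ E)"
    using cyclotomic_mult_prime_power_cong[OF p \<open>0 < n\<close>, of k] by blast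
  have "cyclotomic n ^ E = cyclotomic n * cyclotomic n ^ (E - 1)"
    using \<open>0 < E\<close> by (simp add: power_eq_if)
  then have "cyclotomic n ^ E \<in> ideal2 [:int p:] (cyclotomic n)"
    by (simp add: ideal2_generator_right)
  then have "cyclotomic m ^ 1 \<in> ideal2 [:int p:] (cyclotomic n)"
    using ideal2_cong[OF E] by simp
  then show ?thesis by blast
qed

lemma rhoZ_surjective_intermediate:
  assumes "rhoZ_surjective S S'" "S' \<subseteq> T" "T \<subseteq> S"
  shows "rhoZ_surjective T S'"
  unfolding rhoZ_surjective_def
proof (intro allI impI)
  fix y assume "invlim_elem S' y"
  then obtain x where x: "invlim_elem S x" "\<forall>f\<in>Phi_star S'. f dvd x f - y f"
    using assms(1) unfolding rhoZ_surjective_def by blast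
  have "invlim_elem T x" using x(1) Phi_star_mono[OF assms(3)] unfolding invlim_elem_def by blast
  then show "\<exists>x. invlim_elem T x \<and> (\<forall>f\<in>Phi_star S'. f dvd x f - y f)" using x(2) by blast
qed

lemma not_rhoZ_surjective_prime_power_ratio:
  assumes "finite S" "m \<in> S" "0 < n" "n \<notin> S" "prime p" "n = m * p ^ k \<or> m = n * p ^ k"
    and "insert n S \<subseteq> S'"
  shows "\<not> rhoZ_surjective S' S"
proof
  assume "rhoZ_surjective S' S"
  then have "rhoZ_surjective (insert n S) S"
    by (rule rhoZ_surjective_intermediate[OF _ subset_insertI assms(7)])
  moreover obtain e where "0 < e" "cyclotomic m ^ e \<in> ideal2 [:int p:] (cyclotomic n)"
    using cyclotomic_prime_power_ratio_in_ideal2[OF assms(5,3,6)] by blast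
  ultimately show False using not_rhoZ_surjective_insert[OF assms(1-5)] by blast
qed

lemma not_rhoZ_surjective_pair:
  assumes "0 < m" "0 < n" "m \<noteq> n" "prime p" "m = n * p ^ k \<or> n = m * p ^ k"
  shows "\<not> rhoZ_surjective {m, n} {m}"
  using not_rhoZ_surjective_prime_power_ratio[of "{m}" m n p k "{m, n}"] assms by auto

lemma not_rhoZ_surjective_divisors_set:
  assumes "0 < m" "m dvd n" "m \<noteq> n"
  shows "\<not> rhoZ_surjective (divisors_set n) (divisors_set m)"
proof -
  obtain r where r: "n = m * r" using assms(2) by (elim dvdE)
  then have "r \<noteq> 1" using assms(3) by auto
  then obtain p where p: "prime p" "p dvd r" using prime_factor_nat by blast
  have "m < m * p" using assms(1) prime_gt_1_nat[OF p(1)] by simp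
  then have "m * p \<notin> divisors_set m" by (auto simp: divisors_set_def dest: dvd_imp_le)
  moreover have "insert (m * p) (divisors_set m) \<subseteq> divisors_set n"
    using assms(1,2) p(2) \<open>m < m * p\<close> by (auto simp: divisors_set_def r intro: dvd_trans)
  ultimately show ?thesis
    using not_rhoZ_surjective_prime_power_ratio[of "divisors_set m" m "m * p" p 1] assms(1) p(1)
    by (simp add: divisors_set_def)
qed

lemma not_rhoZ_surjective_positive:
  assumes "finite S" "S \<noteq> {}" "S \<subseteq> {0<..}"
  shows "\<not> rhoZ_surjective {0<..} S"
proof -
  have "Max S \<in> S" using assms(1,2) by simp
  then have "0 < Max S" using assms(3) by auto
  have "Max S * 2 \<notin> S"
  proof
    assume "Max S * 2 \<in> S"
    then have "Max S * 2 \<le> Max S" by (rule Max_ge[OF assms(1)])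
    then show False using \<open>0 < Max S\<close> by simp
  qed
  show ?thesis
    by (rule not_rhoZ_surjective_prime_power_ratio[OF assms(1) \<open>Max S \<in> S\<close> _ \<open>Max S * 2 \<notin> S\<close> two_is_prime_nat, where k = 1])
       (use \<open>0 < Max S\<close> assms(3) in auto)
qed

theorem proposition7p7:
  shows "(\<forall>m n::nat. 0 < m \<and> 0 < n \<and> m \<noteq> n \<and>
            (\<exists>p k. prime (p::nat) \<and> (m = n * p ^ k \<or> n = m * p ^ k))
          \<longrightarrow> \<not> rhoZ_surjective {m, n} {m})
       \<and> (\<forall>m n::nat. 0 < m \<and> 0 < n \<and> m dvd n \<and> m \<noteq> n
          \<longrightarrow> \<not> rhoZ_surjective (divisors_set n) (divisors_set m))
       \<and> (\<forall>S::nat set. finite S \<and> S \<noteq> {} \<and> S \<subseteq> {0<..}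
          \<longrightarrow> \<not> rhoZ_surjective {0<..} S)"
  using not_rhoZ_surjective_pair not_rhoZ_surjective_divisors_set not_rhoZ_surjective_positive
  by blast

end
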